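(* For a translation-invariant real function $f$ defined on finite simplicial complexes with vertices in $\mathbb{R}^d\times\mathbb{A}$, the following are equivalent: (i) $f$ is weakly stabilizing; (ii) for every increasing sequence of cubes $(W_n)_{n\in\mathbb{N}}$ with $W_n\to\mathbb{R}^d$, the sequence $\Lambda_{(\mathbf{0},V,1,U)}f(\Delta_{W_n})$ converges in probability as $n\to\infty$.
   Context: Model. Fix $d\in\mathbb{N}$, a Borel space $(\mathbb{A},\mathcal{T})$ with a probability measure $\Theta$, an intensity $\gamma>0$ and $\alpha\in\mathbb{N}$. For $j\in\{1,\dots,\alpha\}$ let $\varphi_j:(\mathbb{R}^d\times\mathbb{A})^{j+1}\to[0,1]$ be measurable, symmetric and translation-invariant, i.e. $\varphi_j((x_0+t,a_0),\dots,(x_j+t,a_j))=\varphi_j((x_0,a_0),\dots,(x_j,a_j))$. Let $\mathbb{M}=\prod_{j=1}^{\alpha}[0,1]^{\mathbb{N}^{2j}}$ with the product $\sigma$-field and $\mathbb{Q}$ the product of uniform distributions on $[0,1]$ over all coordinates. Let $\Psi$ be a Poisson process on $\mathbb{R}^d\times\mathbb{A}\times[0,1]\times\mathbb{M}$ with intensity measure $\gamma\lambda_d\otimes\Theta\otimes\mathcal{U}([0,1])\otimes\mathbb{Q}$. For a locally finite counting measure $\psi$ on this space (distinct third coordinates) the complex $T(\psi)$ is built as follows. Fix an enumeration $z_0=\mathbf{0},z_1,\dots$ of $\mathbb{Z}^d$, $Q_k=[0,1)^d+z_k$. A point $(x,a,s,u)$ of $\psi$ with $x\in Q_k$ gets coordinates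 $(k,i)$ if it is the $i$-th smallest point of $\psi$ in $Q_k\times\mathbb{A}\times[0,1]\times\mathbb{M}$ in the order of third coordinates. For points $(x_0,a_0,s_0,u^{(0)}),\dots,(x_j,a_j,s_j,u^{(j)})$ with $s_0<\dots<s_j$, $1\le j\le\alpha$, and $\sigma=\{(x_0,a_0),\dots,(x_j,a_j)\}$, put $u(\sigma):=u^{(j)}_{m_0,l_0,\dots,m_{j-1},l_{j-1}}$ (coordinate in the factor $[0,1]^{\mathbb{N}^{2j}}$), $(m_k,l_k)$ the coordinates of the $k$-th point. Vertices of $T(\psi)$ are the points $(x,a)$ of $\psi$; a set $\sigma$ of $j+1$ vertices, $1\le j\le\alpha$, is a simplex iff $u(\rho)\le\varphi_{|\rho|-1}(\rho)$ for all $\rho\subseteq\sigma$ with $|\rho|\ge2$. Set $\Delta:=T(\Psi)$, $\Delta^{(x,a,t,u)}:=T(\Psi+\delta_{(x,a,t,u)})$. For a complex $K$ and $W\subseteq\mathbb{R}^d$, $K_W$ is the subcomplex of simplices all of whose vertices have first coordinate in $W$. For a real function $f$ on finite simplicial complexes, $\Lambda_{(x,a,t,u)}f(\Delta_W):=f(\Delta^{(x,a,t,u)}_W)-f(\Delta^{(x,a,t,u)}_{W\setminus\{x\}})$. Weak stabilization. Let $V\sim\Theta$ and $U\sim\mathbb{Q}$ be independent of each other and of $\Psi$. Cubes are half-open axis-parallel cubes $\prod_{i=1}^d[c_i,c_i+s)$; $W_n\to\mathbb{R}^d$ means every bounded set is contained in $W_n$ for all large $n$. $f$ is translation-invariant if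 $f(K)=f(K+t)$ for all $t\in\mathbb{R}^d$ and finite complexes $K$ ($K+t$ translates the $\mathbb{R}^d$-components of all vertices). $f$ is weakly stabilizing if it is translation-invariant and there is a real random variable $Z$ with $\Lambda_{(\mathbf{0},V,1,U)}f(\Delta_{W_n})\to Z$ in probability for every sequence of cubes $W_n\to\mathbb{R}^d$. *)

theory Defs
  imports "HOL-Probability.Probability"
begin

text \<open>Marks: the space M = prod_{j=1..alpha} [0,1]^(N^(2j)) is represented by functions
  on the countable index set mark_index alpha = {(j,l). 1 \<le> j \<le> alpha, length l = 2j}:
  the coordinate u^(j)_(m0,l0,...,m(j-1),l(j-1)) is u (j,[m0,l0,...]).\<close>

type_synonym mark = "nat \<times> nat list \<Rightarrow> real"

definition mark_index :: "nat \<Rightarrow> (nat \<times> nat list) set" where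
  "mark_index \<alpha> = {(j, l). 1 \<le> j \<and> j \<le> \<alpha> \<and> length l = 2 * j}"

definition unif01 :: "real measure" where
  "unif01 = uniform_measure lborel {0..1}"

definition markQ :: "nat \<Rightarrow> mark measure" where
  "markQ \<alpha> = PiM (mark_index \<alpha>) (\<lambda>_. unif01)"

type_synonym ('d, 'a) pt = "'d \<times> 'a \<times> real \<times> mark"

definition ploc :: "('d, 'a) pt \<Rightarrow> 'd" where "ploc p = fst p"
definition pvert :: "('d, 'a) pt \<Rightarrow> 'd \<times> 'a" where "pvert p = (fst p, fst (snd p))"
definition ptime :: "('d, 'a) pt \<Rightarrow> real" where "ptime p = fst (snd (snd p))"
definition pmark :: "('d, 'a) pt \<Rightarrow> mark" where "pmark p = snd (snd (snd p))"

definition intensity ::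
  "real \<Rightarrow> 'a measure \<Rightarrow> nat \<Rightarrow> ('d::euclidean_space, 'a) pt measure" where
  "intensity \<gamma> \<Theta> \<alpha> =
     density lborel (\<lambda>_. ennreal \<gamma>) \<Otimes>\<^sub>M \<Theta> \<Otimes>\<^sub>M unif01 \<Otimes>\<^sub>M markQ \<alpha>"

definition npts :: "'p set \<Rightarrow> 'p set \<Rightarrow> enat" where
  "npts \<psi> B = (if finite (\<psi> \<inter> B) then enat (card (\<psi> \<inter> B)) else \<infinity>)"

definition cfg_space :: "'p measure \<Rightarrow> 'p set measure" where
  "cfg_space \<mu> = sigma UNIV {{\<psi>. npts \<psi> B = k} | B k. B \<in> sets \<mu>}"

text \<open>A (simple) Poisson process with intensity measure mu, realised as a random
  set of points on the probability space P (counting measure = sum of Dirac masses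
  at the points of the set).\<close>
definition poisson_process :: "'o measure \<Rightarrow> 'p measure \<Rightarrow> ('o \<Rightarrow> 'p set) \<Rightarrow> bool" where
  "poisson_process P \<mu> \<Psi> \<longleftrightarrow>
     prob_space P \<and>
     (\<forall>B\<in>sets \<mu>. (\<lambda>\<omega>. npts (\<Psi> \<omega>) B) \<in> measurable P (count_space UNIV)) \<and>
     (\<forall>B\<in>sets \<mu>. emeasure \<mu> B < \<infinity> \<longrightarrow>
        (\<forall>k::nat. measure P {\<omega>\<in>space P. npts (\<Psi> \<omega>) B = enat k}
                   = (enn2real (emeasure \<mu> B)) ^ k / fact k * exp (- enn2real (emeasure \<mu> B)))) \<and>
     (\<forall>B\<in>sets \<mu>. emeasure \<mu> B = \<infinity> \<longrightarrow>
        (AE \<omega> in P. npts (\<Psi> \<omega>) B = \<infinity>)) \<and>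
     (\<forall>(I::nat set) B. finite I \<longrightarrow> (\<forall>i\<in>I. B i \<in> sets \<mu>) \<longrightarrow> disjoint_family_on B I \<longrightarrow>
        prob_space.indep_vars P (\<lambda>_. count_space UNIV) (\<lambda>i \<omega>. npts (\<Psi> \<omega>) (B i)) I)"

definition hcube :: "'d::euclidean_space \<Rightarrow> real \<Rightarrow> 'd set" where
  "hcube c s = {x. \<forall>i\<in>Basis. c \<bullet> i \<le> x \<bullet> i \<and> x \<bullet> i < c \<bullet> i + s}"

definition is_cube :: "'d::euclidean_space set \<Rightarrow> bool" where
  "is_cube W \<longleftrightarrow> (\<exists>c s. s > 0 \<and> W = hcube c s)"

definition lattice :: "'d::euclidean_space set" where
  "lattice = {z. \<forall>i\<in>Basis. z \<bullet> i \<in> \<int>}"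

definition lattice_enum :: "(nat \<Rightarrow> 'd::euclidean_space) \<Rightarrow> bool" where
  "lattice_enum z \<longleftrightarrow> bij_betw z UNIV lattice \<and> z 0 = 0"

definition cell :: "(nat \<Rightarrow> 'd::euclidean_space) \<Rightarrow> 'd \<Rightarrow> nat" where
  "cell z x = (THE k. x \<in> hcube (z k) 1)"

definition tends_to_space :: "(nat \<Rightarrow> 'd::euclidean_space set) \<Rightarrow> bool" where
  "tends_to_space W \<longleftrightarrow> (\<forall>B. bounded B \<longrightarrow> (\<forall>\<^sub>F n in sequentially. B \<subseteq> W n))"

text \<open>Coordinates (k,i): k the cell index, i the rank (1-based) of p among the points of
  psi in the same cell, ordered by third coordinate.\<close>
definition prank :: "(nat \<Rightarrow> 'd::euclidean_space) \<Rightarrow> ('d, 'a) pt set \<Rightarrow> ('d, 'a) pt \<Rightarrow> nat" where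
  "prank z \<psi> p = card {q\<in>\<psi>. cell z (ploc q) = cell z (ploc p) \<and> ptime q \<le> ptime p}"

text \<open>The i-th point (0-based) of a finite point set in increasing order of third coordinates.\<close>
definition ord_pt :: "('d, 'a) pt set \<Rightarrow> nat \<Rightarrow> ('d, 'a) pt" where
  "ord_pt R i = (THE p. p \<in> R \<and> card {q\<in>R. ptime q < ptime p} = i)"

text \<open>u(sigma) for a set R of j+1 points: coordinate
  u^(j)_(m0,l0,...,m(j-1),l(j-1)) of the mark of the last point.\<close>
definition uval :: "(nat \<Rightarrow> 'd::euclidean_space) \<Rightarrow> ('d, 'a) pt set \<Rightarrow> ('d, 'a) pt set \<Rightarrow> real" where
  "uval z \<psi> R =
     (let j = card R - 1 in
      pmark (ord_pt R j)
        (j, concat (map (\<lambda>k. [cell z (ploc (ord_pt R k)), prank z \<psi> (ord_pt R k)]) [0..<j])))"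

text \<open>The connection functions phi_j are given as functions of (j+1)-tuples, i.e. of maps
  on {0..j}; phi_j(rho) means phi_j applied to the vertices of rho in any order.\<close>
definition phi_val :: "(nat \<Rightarrow> (nat \<Rightarrow> 'd \<times> 'a) \<Rightarrow> real) \<Rightarrow> ('d, 'a) pt set \<Rightarrow> real" where
  "phi_val \<phi> R = \<phi> (card R - 1) (\<lambda>i. pvert (ord_pt R i))"

definition Tcomplex ::
  "(nat \<Rightarrow> 'd::euclidean_space) \<Rightarrow> nat \<Rightarrow> (nat \<Rightarrow> (nat \<Rightarrow> 'd \<times> 'a) \<Rightarrow> real)
     \<Rightarrow> ('d, 'a) pt set \<Rightarrow> ('d \<times> 'a) set set" where
  "Tcomplex z \<alpha> \<phi> \<psi> =
     {pvert ` P | P. P \<subseteq> \<psi> \<and> finite P \<and> 1 \<le> card P \<and> card P \<le> \<alpha> + 1 \<and>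
        (\<forall>R\<subseteq>P. 2 \<le> card R \<longrightarrow> uval z \<psi> R \<le> phi_val \<phi> R)}"

definition restr :: "('d \<times> 'a) set set \<Rightarrow> 'd set \<Rightarrow> ('d \<times> 'a) set set" where
  "restr K W = {\<sigma>\<in>K. \<forall>v\<in>\<sigma>. fst v \<in> W}"

definition add_one_cost ::
  "(nat \<Rightarrow> 'd::euclidean_space) \<Rightarrow> nat \<Rightarrow> (nat \<Rightarrow> (nat \<Rightarrow> 'd \<times> 'a) \<Rightarrow> real)
    \<Rightarrow> (('d \<times> 'a) set set \<Rightarrow> real) \<Rightarrow> ('d, 'a) pt \<Rightarrow> ('d, 'a) pt set \<Rightarrow> 'd set \<Rightarrow> real" where
  "add_one_cost z \<alpha> \<phi> f p \<psi> W =
     f (restr (Tcomplex z \<alpha> \<phi> (insert p \<psi>)) W)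
     - f (restr (Tcomplex z \<alpha> \<phi> (insert p \<psi>)) (W - {ploc p}))"

definition fin_complex :: "('d \<times> 'a) set set \<Rightarrow> bool" where
  "fin_complex K \<longleftrightarrow> finite K \<and> (\<forall>\<sigma>\<in>K. finite \<sigma> \<and> \<sigma> \<noteq> {} \<and>
      (\<forall>\<tau>. \<tau> \<subseteq> \<sigma> \<longrightarrow> \<tau> \<noteq> {} \<longrightarrow> \<tau> \<in> K))"

definition translate_cplx :: "('d::ab_group_add \<times> 'a) set set \<Rightarrow> 'd \<Rightarrow> ('d \<times> 'a) set set" where
  "translate_cplx K t = (\<lambda>\<sigma>. (\<lambda>(x, a). (x + t, a)) ` \<sigma>) ` K"

definition translation_invariant :: "(('d::ab_group_add \<times> 'a) set set \<Rightarrow> real) \<Rightarrow> bool" where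
  "translation_invariant f \<longleftrightarrow> (\<forall>K t. fin_complex K \<longrightarrow> f (translate_cplx K t) = f K)"

definition conv_in_prob :: "'o measure \<Rightarrow> (nat \<Rightarrow> 'o \<Rightarrow> real) \<Rightarrow> ('o \<Rightarrow> real) \<Rightarrow> bool" where
  "conv_in_prob P X Z \<longleftrightarrow>
     (\<forall>n. X n \<in> borel_measurable P) \<and> Z \<in> borel_measurable P \<and>
     (\<forall>\<epsilon>>0. (\<lambda>n. measure P {\<omega>\<in>space P. \<bar>X n \<omega> - Z \<omega>\<bar> > \<epsilon>}) \<longlonglongrightarrow> 0)"

text \<open>V ~ Theta, U ~ Q and Psi are independent: the joint law of (V,U,Psi) is the
  product of Theta, Q and the law of Psi.\<close>

definition borel_space_iso :: "'a measure \<Rightarrow> bool" where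
  "borel_space_iso A \<longleftrightarrow> (\<exists>h :: 'a \<Rightarrow> real. \<exists>S. S \<in> sets borel \<and>
     bij_betw h (space A) S \<and> h \<in> measurable A borel \<and>
     (\<forall>E\<in>sets A. h ` E \<in> sets borel))"

definition model ::
  "'o measure \<Rightarrow> 'a measure \<Rightarrow> real \<Rightarrow> nat \<Rightarrow> (nat \<Rightarrow> (nat \<Rightarrow> 'd::euclidean_space \<times> 'a) \<Rightarrow> real)
    \<Rightarrow> (nat \<Rightarrow> 'd) \<Rightarrow> ('o \<Rightarrow> ('d, 'a) pt set) \<Rightarrow> ('o \<Rightarrow> 'a) \<Rightarrow> ('o \<Rightarrow> mark) \<Rightarrow> bool" where
  "model P \<Theta> \<gamma> \<alpha> \<phi> z \<Psi> V U \<longleftrightarrow>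
     prob_space P \<and> prob_space \<Theta> \<and> borel_space_iso \<Theta> \<and> \<gamma> > 0 \<and> 1 \<le> \<alpha> \<and>
     (\<forall>j\<in>{1..\<alpha>}.
        \<phi> j \<in> borel_measurable (PiM {..j} (\<lambda>_. (lborel :: 'd measure) \<Otimes>\<^sub>M \<Theta>)) \<and>
        (\<forall>v. 0 \<le> \<phi> j v \<and> \<phi> j v \<le> 1) \<and>
        (\<forall>v \<pi>. \<pi> permutes {..j} \<longrightarrow> \<phi> j (v \<circ> \<pi>) = \<phi> j v) \<and>
        (\<forall>v t. \<phi> j (\<lambda>i. (fst (v i) + t, snd (v i))) = \<phi> j v)) \<and>
     lattice_enum z \<and>
     poisson_process P (intensity \<gamma> \<Theta> \<alpha>) \<Psi> \<and>
     V \<in> measurable P \<Theta> \<and> U \<in> measurable P (markQ \<alpha>) \<and>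
     \<Psi> \<in> measurable P (cfg_space (intensity \<gamma> \<Theta> \<alpha>)) \<and>
     distr P (\<Theta> \<Otimes>\<^sub>M markQ \<alpha> \<Otimes>\<^sub>M cfg_space (intensity \<gamma> \<Theta> \<alpha>))
        (\<lambda>\<omega>. (V \<omega>, U \<omega>, \<Psi> \<omega>))
       = \<Theta> \<Otimes>\<^sub>M markQ \<alpha> \<Otimes>\<^sub>M distr P (cfg_space (intensity \<gamma> \<Theta> \<alpha>)) \<Psi>"

definition Lam0 ::
  "(nat \<Rightarrow> 'd::euclidean_space) \<Rightarrow> nat \<Rightarrow> (nat \<Rightarrow> (nat \<Rightarrow> 'd \<times> 'a) \<Rightarrow> real)
    \<Rightarrow> (('d \<times> 'a) set set \<Rightarrow> real) \<Rightarrow> ('o \<Rightarrow> ('d, 'a) pt set) \<Rightarrow> ('o \<Rightarrow> 'a) \<Rightarrow> ('o \<Rightarrow> mark)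
    \<Rightarrow> 'd set \<Rightarrow> 'o \<Rightarrow> real" where
  "Lam0 z \<alpha> \<phi> f \<Psi> V U W \<omega> = add_one_cost z \<alpha> \<phi> f (0, V \<omega>, 1, U \<omega>) (\<Psi> \<omega>) W"

definition weakly_stabilizing ::
  "'o measure \<Rightarrow> (nat \<Rightarrow> 'd::euclidean_space) \<Rightarrow> nat \<Rightarrow> (nat \<Rightarrow> (nat \<Rightarrow> 'd \<times> 'a) \<Rightarrow> real)
    \<Rightarrow> (('d \<times> 'a) set set \<Rightarrow> real) \<Rightarrow> ('o \<Rightarrow> ('d, 'a) pt set) \<Rightarrow> ('o \<Rightarrow> 'a) \<Rightarrow> ('o \<Rightarrow> mark) \<Rightarrow> bool" where
  "weakly_stabilizing P z \<alpha> \<phi> f \<Psi> V U \<longleftrightarrow>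
     translation_invariant f \<and>
     (\<exists>Z. \<forall>W. (\<forall>n. is_cube (W n)) \<longrightarrow> tends_to_space W \<longrightarrow>
        conv_in_prob P (\<lambda>n. Lam0 z \<alpha> \<phi> f \<Psi> V U (W n)) Z)"

end

theory Submission
  imports Defs
begin

(* Only (ii) => (i) needs an argument, and it uses no property of the model beyond P being a
   finite measure. Interleaving a cube sequence W' tending to R^d with a fixed increasing
   reference sequence W, along suitable subsequences, yields an increasing cube sequence. By (ii)
   it converges in probability, so its odd part (a subsequence of W') has the same limit as its
   even part, i.e. the limit Z of L(W n). As this applies to every subsequence of W', the
   sub-subsequence criterion gives L(W' n) -> Z in probability. *)

lemma LIMSEQ_subsubseq:
  fixes X :: "nat \<Rightarrow> 'a::metric_space"
  assumes "\<And>r :: nat \<Rightarrow> nat. strict_mono r \<Longrightarrow> \<exists>s. strict_mono s \<and> (X \<circ> r \<circ> s) \<longlonglongrightarrow> l"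
  shows "X \<longlonglongrightarrow> l"
proof (rule ccontr)
  assume "\<not> X \<longlonglongrightarrow> l"
  then obtain e where "e > 0" and "infinite {n. \<not> dist (X n) l < e}"
    by (auto simp: tendsto_iff not_eventually INFM_iff_infinite cofinite_eq_sequentially[symmetric])
  then obtain r :: "nat \<Rightarrow> nat" where far: "\<And>n. \<not> dist (X (r n)) l < e" and "strict_mono r"
    using enumerate_in_set enumerate_mono by (fastforce simp: strict_mono_def)
  then obtain s where "(X \<circ> r \<circ> s) \<longlonglongrightarrow> l"
    using assms by blast
  then show False
    using far \<open>e > 0\<close> by (auto dest: tendstoD)
qed

lemma conv_in_prob_subseq:
  assumes "conv_in_prob P X Z" "strict_mono r"
  shows "conv_in_prob P (X \<circ> r) Z"
  using assms LIMSEQ_subseq_LIMSEQ[OF _ assms(2)] unfolding conv_in_prob_def by (auto simp: o_def)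

lemma conv_in_prob_subsubseq:
  assumes "\<And>n. X n \<in> borel_measurable P" "Z \<in> borel_measurable P"
    and "\<And>r :: nat \<Rightarrow> nat. strict_mono r \<Longrightarrow> \<exists>s. strict_mono s \<and> conv_in_prob P (X \<circ> r \<circ> s) Z"
  shows "conv_in_prob P X Z"
  unfolding conv_in_prob_def
proof (intro conjI allI impI assms(1,2))
  fix \<epsilon> :: real assume "\<epsilon> > 0"
  show "(\<lambda>n. measure P {\<omega>\<in>space P. \<bar>X n \<omega> - Z \<omega>\<bar> > \<epsilon>}) \<longlonglongrightarrow> 0"
  proof (rule LIMSEQ_subsubseq)
    fix r :: "nat \<Rightarrow> nat" assume "strict_mono r"
    then obtain s where "strict_mono s" "conv_in_prob P (X \<circ> r \<circ> s) Z"
      using assms(3) by blast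
    then show "\<exists>s. strict_mono s \<and>
        ((\<lambda>n. measure P {\<omega>\<in>space P. \<bar>X n \<omega> - Z \<omega>\<bar> > \<epsilon>}) \<circ> r \<circ> s) \<longlonglongrightarrow> 0"
      using \<open>\<epsilon> > 0\<close> unfolding conv_in_prob_def by (auto simp: o_def)
  qed
qed

lemma (in finite_measure) measure_abs_diff_gt_triangle:
  fixes X Y Z :: "'a \<Rightarrow> real"
  assumes "X \<in> borel_measurable M" "Y \<in> borel_measurable M" "Z \<in> borel_measurable M"
  shows "measure M {\<omega>\<in>space M. \<bar>X \<omega> - Z \<omega>\<bar> > e} \<le>
    measure M {\<omega>\<in>space M. \<bar>X \<omega> - Y \<omega>\<bar> > e/2} + measure M {\<omega>\<in>space M. \<bar>Y \<omega> - Z \<omega>\<bar> > e/2}"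
proof -
  have "{\<omega>\<in>space M. \<bar>X \<omega> - Z \<omega>\<bar> > e} \<subseteq>
      {\<omega>\<in>space M. \<bar>X \<omega> - Y \<omega>\<bar> > e/2} \<union> {\<omega>\<in>space M. \<bar>Y \<omega> - Z \<omega>\<bar> > e/2}"
    by (auto simp: abs_if split: if_splits)
  moreover have "{\<omega>\<in>space M. \<bar>X \<omega> - Y \<omega>\<bar> > e/2} \<in> sets M"
    "{\<omega>\<in>space M. \<bar>Y \<omega> - Z \<omega>\<bar> > e/2} \<in> sets M"
    using assms by measurable
  ultimately show ?thesis
    by (meson finite_measure_mono measure_Un_le sets.Un order_trans)
qed

lemma conv_in_prob_limits_agree:
  assumes "finite_measure P" "conv_in_prob P X Z" "conv_in_prob P X Z'" "d > 0"
  shows "measure P {\<omega>\<in>space P. \<bar>Z \<omega> - Z' \<omega>\<bar> > d} = 0"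
proof -
  interpret finite_measure P by (rule assms(1))
  have meas: "X n \<in> borel_measurable P" "Z \<in> borel_measurable P" "Z' \<in> borel_measurable P" for n
    using assms(2,3) unfolding conv_in_prob_def by auto
  let ?far = "\<lambda>Y n. measure P {\<omega>\<in>space P. \<bar>X n \<omega> - Y \<omega>\<bar> > d/2}"
  have "?far Z \<longlonglongrightarrow> 0" "?far Z' \<longlonglongrightarrow> 0"
    using assms(2,3) half_gt_zero[OF assms(4)] unfolding conv_in_prob_def by blast+
  then have "(\<lambda>n. ?far Z n + ?far Z' n) \<longlonglongrightarrow> 0 + 0"
    by (rule tendsto_add)
  moreover have "measure P {\<omega>\<in>space P. \<bar>Z \<omega> - Z' \<omega>\<bar> > d} \<le> ?far Z n + ?far Z' n" for n
    using measure_abs_diff_gt_triangle[OF meas(2,1,3)] by (simp add: abs_minus_commute)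
  ultimately have "measure P {\<omega>\<in>space P. \<bar>Z \<omega> - Z' \<omega>\<bar> > d} \<le> 0"
    by (intro LIMSEQ_le_const) auto
  then show ?thesis
    by (simp add: order_antisym)
qed

lemma conv_in_prob_change_limit:
  assumes "finite_measure P" "conv_in_prob P Y Z" "Z' \<in> borel_measurable P"
    and "\<And>d. d > 0 \<Longrightarrow> measure P {\<omega>\<in>space P. \<bar>Z \<omega> - Z' \<omega>\<bar> > d} = 0"
  shows "conv_in_prob P Y Z'"
  unfolding conv_in_prob_def
proof (intro conjI allI impI assms(3))
  interpret finite_measure P by (rule assms(1))
  show meas: "Y n \<in> borel_measurable P" for n
    using assms(2) unfolding conv_in_prob_def by auto
  have "Z \<in> borel_measurable P"
    using assms(2) unfolding conv_in_prob_def by auto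
  fix \<epsilon> :: real assume "\<epsilon> > 0"
  let ?near = "\<lambda>n. measure P {\<omega>\<in>space P. \<bar>Y n \<omega> - Z \<omega>\<bar> > \<epsilon>/2}"
  have near_lim: "?near \<longlonglongrightarrow> 0"
    using assms(2) half_gt_zero[OF \<open>\<epsilon> > 0\<close>] unfolding conv_in_prob_def by blast
  have far_le_near: "measure P {\<omega>\<in>space P. \<bar>Y n \<omega> - Z' \<omega>\<bar> > \<epsilon>} \<le> ?near n" for n
  proof -
    have "measure P {\<omega>\<in>space P. \<bar>Y n \<omega> - Z' \<omega>\<bar> > \<epsilon>}
        \<le> ?near n + measure P {\<omega>\<in>space P. \<bar>Z \<omega> - Z' \<omega>\<bar> > \<epsilon>/2}"
      by (rule measure_abs_diff_gt_triangle[OF meas \<open>Z \<in> borel_measurable P\<close> assms(3)])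
    moreover have "measure P {\<omega>\<in>space P. \<bar>Z \<omega> - Z' \<omega>\<bar> > \<epsilon>/2} = 0"
      using \<open>\<epsilon> > 0\<close> by (intro assms(4)) simp
    ultimately show ?thesis
      by simp
  qed
  show "(\<lambda>n. measure P {\<omega>\<in>space P. \<bar>Y n \<omega> - Z' \<omega>\<bar> > \<epsilon>}) \<longlonglongrightarrow> 0"
    by (rule tendsto_sandwich[OF _ _ tendsto_const near_lim])
      (blast intro: always_eventually far_le_near measure_nonneg)+
qed

lemma is_cube_bounded: "is_cube W \<Longrightarrow> bounded W"
proof -
  have "hcube c s \<subseteq> cbox c (c + s *\<^sub>R One)" for c :: 'a and s
    by (auto simp: hcube_def mem_box inner_simps less_imp_le)
  then show "is_cube W \<Longrightarrow> bounded W"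
    unfolding is_cube_def using bounded_cbox bounded_subset by metis
qed

definition grown_cube :: "'d::euclidean_space \<Rightarrow> real \<Rightarrow> nat \<Rightarrow> 'd set" where
  "grown_cube c s n = hcube (c - real n *\<^sub>R One) (s + 2 * real n)"

lemma grown_cube_0 [simp]: "grown_cube c s 0 = hcube c s"
  by (simp add: grown_cube_def)

lemma is_cube_grown_cube: "s > 0 \<Longrightarrow> is_cube (grown_cube c s n)"
  unfolding is_cube_def grown_cube_def
  by (intro exI[of _ "c - real n *\<^sub>R One"] exI[of _ "s + 2 * real n"]) auto

lemma grown_cube_Suc_subset: "grown_cube c s n \<subseteq> grown_cube c s (Suc n)"
  by (auto simp: grown_cube_def hcube_def inner_simps)

lemma tends_to_space_grown_cube: "tends_to_space (grown_cube c s)"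
  unfolding tends_to_space_def
proof (intro allI impI)
  fix X :: "'a set" assume "bounded X"
  then obtain R where R: "\<And>x. x \<in> X \<Longrightarrow> norm x \<le> R"
    unfolding bounded_iff by blast
  obtain N :: nat where N: "R + norm c + \<bar>s\<bar> < real N"
    using reals_Archimedean2 by blast
  have "X \<subseteq> grown_cube c s n" if "N \<le> n" for n
  proof
    fix x assume "x \<in> X"
    have "c \<bullet> i - real n \<le> x \<bullet> i \<and> x \<bullet> i < c \<bullet> i - real n + (s + 2 * real n)"
      if "i \<in> Basis" for i
    proof -
      have "\<bar>x \<bullet> i\<bar> \<le> R" "\<bar>c \<bullet> i\<bar> \<le> norm c"
        using Basis_le_norm[OF that] R[OF \<open>x \<in> X\<close>] order_trans by blast+
      moreover have "real N \<le> real n"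
        using \<open>N \<le> n\<close> by simp
      ultimately show ?thesis
        using N by (auto simp: abs_le_iff)
    qed
    then show "x \<in> grown_cube c s n"
      by (simp add: grown_cube_def hcube_def inner_simps)
  qed
  then show "\<forall>\<^sub>F n in sequentially. X \<subseteq> grown_cube c s n"
    unfolding eventually_sequentially by blast
qed

lemma tends_to_space_subseq:
  assumes "tends_to_space W" "strict_mono r"
  shows "tends_to_space (\<lambda>n. W (r n))"
  using assms eventually_subseq unfolding tends_to_space_def by blast

lemma interleave_increasing:
  fixes A B :: "nat \<Rightarrow> 'd::euclidean_space set"
  assumes bounded: "\<And>n. bounded (A n)" "\<And>n. bounded (B n)"
    and tends: "tends_to_space A" "tends_to_space B"
  obtains S :: "nat \<Rightarrow> 'd set" and r s :: "nat \<Rightarrow> nat"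
  where "\<And>n. S n \<subseteq> S (Suc n)" "tends_to_space S" "\<And>n. S n \<in> range A \<union> range B"
    "strict_mono r" "strict_mono s" "\<And>k. S (2 * k) = A (r k)" "\<And>k. S (2 * k + 1) = B (s k)"
proof -
  define F where "F n = (if even n then A else B)" for n :: nat
  have "\<exists>m. k < m \<and> F n k \<subseteq> F (Suc n) m" for n k
  proof -
    have "bounded (F n k)" "tends_to_space (F (Suc n))"
      using bounded tends by (simp_all add: F_def)
    then obtain N where "\<And>m. m \<ge> N \<Longrightarrow> F n k \<subseteq> F (Suc n) m"
      unfolding tends_to_space_def eventually_sequentially by blast
    then show ?thesis
      by (intro exI[of _ "max N (Suc k)"]) auto
  qed
  then obtain i where i: "\<And>n. i n < i (Suc n) \<and> F n (i n) \<subseteq> F (Suc n) (i (Suc n))"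
    using dependent_nat_choice[of "\<lambda>_ _. True" "\<lambda>n k m. k < m \<and> F n k \<subseteq> F (Suc n) m"] by auto
  then have "strict_mono i"
    by (simp add: strict_mono_Suc_iff)
  define S where "S n = F n (i n)" for n
  have "tends_to_space S"
    unfolding tends_to_space_def
  proof (intro allI impI)
    fix X :: "'d set" assume "bounded X"
    then obtain N1 N2 where N: "\<And>m. m \<ge> N1 \<Longrightarrow> X \<subseteq> A m" "\<And>m. m \<ge> N2 \<Longrightarrow> X \<subseteq> B m"
      using tends unfolding tends_to_space_def eventually_sequentially by meson
    have "X \<subseteq> S n" if "max N1 N2 \<le> n" for n
    proof -
      have "N1 \<le> i n" "N2 \<le> i n"
        using that seq_suble[OF \<open>strict_mono i\<close>, of n] by auto
      then show ?thesis
        using N by (simp add: S_def F_def)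
    qed
    then show "\<forall>\<^sub>F n in sequentially. X \<subseteq> S n"
      unfolding eventually_sequentially by blast
  qed
  moreover have "strict_mono (\<lambda>k. i (2 * k))" "strict_mono (\<lambda>k. i (2 * k + 1))"
    by (intro strict_monoI strict_monoD[OF \<open>strict_mono i\<close>]; simp)+
  ultimately show thesis
    using i by (intro that[of S "\<lambda>k. i (2 * k)" "\<lambda>k. i (2 * k + 1)"]) (auto simp: S_def F_def)
qed

context
  fixes P :: "'o measure" and L :: "'d::euclidean_space set \<Rightarrow> 'o \<Rightarrow> real"
  assumes finite: "finite_measure P"
    and increasing_conv: "\<And>W. (\<forall>n. is_cube (W n)) \<Longrightarrow> (\<forall>n. W n \<subseteq> W (Suc n)) \<Longrightarrow>
      tends_to_space W \<Longrightarrow> \<exists>Z. conv_in_prob P (\<lambda>n. L (W n)) Z"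
begin

(* Convergence in probability includes measurability of every term, and every cube is the
   first term of an increasing cube sequence. *)
lemma measurable_cube: "is_cube C \<Longrightarrow> L C \<in> borel_measurable P"
proof -
  assume "is_cube C"
  then obtain c s where "s > 0" "C = hcube c s"
    unfolding is_cube_def by blast
  moreover obtain Z where "conv_in_prob P (\<lambda>n. L (grown_cube c s n)) Z"
    using increasing_conv is_cube_grown_cube[OF \<open>s > 0\<close>] grown_cube_Suc_subset
      tends_to_space_grown_cube by blast
  ultimately show ?thesis
    unfolding conv_in_prob_def by (metis grown_cube_0)
qed

lemma cube_limit_along_subseq:
  assumes "\<forall>n. is_cube (W n)" "tends_to_space W" "conv_in_prob P (\<lambda>n. L (W n)) Z"
    and "\<forall>n. is_cube (W' n)" "tends_to_space W'"
  obtains s where "strict_mono s" "conv_in_prob P (\<lambda>n. L (W' (s n))) Z"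
proof -
  obtain S r s where S: "\<And>n. S n \<subseteq> S (Suc n)" "tends_to_space S" "\<And>n. S n \<in> range W \<union> range W'"
    "strict_mono r" "strict_mono s" "\<And>k. S (2 * k) = W (r k)" "\<And>k. S (2 * k + 1) = W' (s k)"
    using interleave_increasing[of W W'] assms is_cube_bounded by metis
  have "\<forall>n. is_cube (S n)"
    using S(3) assms(1,4) by (metis UnE rangeE)
  then obtain Z' where Z': "conv_in_prob P (\<lambda>n. L (S n)) Z'"
    using increasing_conv S(1,2) by blast
  have "conv_in_prob P (\<lambda>k. L (W (r k))) Z'"
    using conv_in_prob_subseq[OF Z', of "\<lambda>k. 2 * k"] S(6) by (simp add: o_def strict_mono_def)
  moreover have "conv_in_prob P (\<lambda>k. L (W (r k))) Z"
    using conv_in_prob_subseq[OF assms(3) S(4)] by (simp add: o_def)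
  ultimately have "measure P {\<omega>\<in>space P. \<bar>Z' \<omega> - Z \<omega>\<bar> > d} = 0" if "d > 0" for d
    using conv_in_prob_limits_agree[OF finite] that by blast
  moreover have "conv_in_prob P (\<lambda>k. L (W' (s k))) Z'"
    using conv_in_prob_subseq[OF Z', of "\<lambda>k. 2 * k + 1"] S(7) by (simp add: o_def strict_mono_def)
  moreover have "Z \<in> borel_measurable P"
    using assms(3) unfolding conv_in_prob_def by blast
  ultimately show thesis
    using that S(5) conv_in_prob_change_limit[OF finite] by blast
qed

lemma cube_limit_unique:
  assumes "\<forall>n. is_cube (W n)" "tends_to_space W" "conv_in_prob P (\<lambda>n. L (W n)) Z"
    and "\<forall>n. is_cube (W' n)" "tends_to_space W'"
  shows "conv_in_prob P (\<lambda>n. L (W' n)) Z"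
proof (rule conv_in_prob_subsubseq)
  show "L (W' n) \<in> borel_measurable P" for n
    using measurable_cube assms(4) by blast
  show "Z \<in> borel_measurable P"
    using assms(3) unfolding conv_in_prob_def by blast
  fix r :: "nat \<Rightarrow> nat" assume "strict_mono r"
  then obtain s where "strict_mono s" "conv_in_prob P (\<lambda>n. L (W' (r (s n)))) Z"
    using cube_limit_along_subseq[OF assms(1-3), of "\<lambda>n. W' (r n)"] assms(4,5)
      tends_to_space_subseq by blast
  then show "\<exists>s. strict_mono s \<and> conv_in_prob P ((\<lambda>n. L (W' n)) \<circ> r \<circ> s) Z"
    by (auto simp: o_def)
qed

lemma common_cube_limit:
  "\<exists>Z. \<forall>W. (\<forall>n. is_cube (W n)) \<longrightarrow> tends_to_space W \<longrightarrow> conv_in_prob P (\<lambda>n. L (W n)) Z"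
proof -
  let ?W = "grown_cube (0 :: 'd) 1"
  have "\<forall>n. is_cube (?W n)" "tends_to_space ?W"
    by (simp_all add: is_cube_grown_cube tends_to_space_grown_cube)
  moreover obtain Z where "conv_in_prob P (\<lambda>n. L (?W n)) Z"
    using increasing_conv calculation grown_cube_Suc_subset by blast
  ultimately show ?thesis
    using cube_limit_unique by blast
qed

end

theorem proposition5p1:
  fixes P :: "'o measure" and \<Theta> :: "'a measure" and \<gamma> :: real and \<alpha> :: nat
    and \<phi> :: "nat \<Rightarrow> (nat \<Rightarrow> 'd::euclidean_space \<times> 'a) \<Rightarrow> real"
    and z :: "nat \<Rightarrow> 'd" and \<Psi> :: "'o \<Rightarrow> ('d, 'a) pt set"
    and V :: "'o \<Rightarrow> 'a" and U :: "'o \<Rightarrow> mark"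
    and f :: "('d \<times> 'a) set set \<Rightarrow> real"
  assumes "model P \<Theta> \<gamma> \<alpha> \<phi> z \<Psi> V U"
    and "translation_invariant f"
  shows "weakly_stabilizing P z \<alpha> \<phi> f \<Psi> V U \<longleftrightarrow>
         (\<forall>W. (\<forall>n. is_cube (W n)) \<longrightarrow> (\<forall>n. W n \<subseteq> W (Suc n)) \<longrightarrow> tends_to_space W \<longrightarrow>
            (\<exists>Z. conv_in_prob P (\<lambda>n. Lam0 z \<alpha> \<phi> f \<Psi> V U (W n)) Z))"
proof
  assume "weakly_stabilizing P z \<alpha> \<phi> f \<Psi> V U"
  then show "\<forall>W. (\<forall>n. is_cube (W n)) \<longrightarrow> (\<forall>n. W n \<subseteq> W (Suc n)) \<longrightarrow> tends_to_space W \<longrightarrow>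
      (\<exists>Z. conv_in_prob P (\<lambda>n. Lam0 z \<alpha> \<phi> f \<Psi> V U (W n)) Z)"
    unfolding weakly_stabilizing_def by blast
next
  assume "\<forall>W. (\<forall>n. is_cube (W n)) \<longrightarrow> (\<forall>n. W n \<subseteq> W (Suc n)) \<longrightarrow> tends_to_space W \<longrightarrow>
      (\<exists>Z. conv_in_prob P (\<lambda>n. Lam0 z \<alpha> \<phi> f \<Psi> V U (W n)) Z)"
  moreover have "finite_measure P"
    using assms(1) prob_space.axioms(1) unfolding model_def by blast
  ultimately show "weakly_stabilizing P z \<alpha> \<phi> f \<Psi> V U"
    using common_cube_limit[of P "Lam0 z \<alpha> \<phi> f \<Psi> V U"] assms(2)
    unfolding weakly_stabilizing_def by blast
qed

end
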